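(* Let $\mathbb{A}=(\mathbb{L},\Box_s,\Diamond_s,\Box_\ell,\Diamond_\ell)$ be an abstract Kent algebra. Then: (i) $\mathbb{A}$ satisfies, for all $a,b$, "$\Box_\ell a\le\Box_\ell b$ and $\Diamond_\ell a\le\Diamond_\ell b$ imply $a\le b$" if and only if $a\wedge\Box_\ell b\le\Diamond_\ell a\vee b$ for all $a,b\in\mathbb{L}$; (ii) $\mathbb{A}$ satisfies, for all $a,b$, "$\Box_s a\le\Box_s b$ and $\Diamond_s a\le\Diamond_s b$ imply $a\le b$" if and only if $a\wedge\Diamond_s b\le\Box_s a\vee b$ for all $a,b\in\mathbb{L}$.
   Context: An abstract Kent algebra (aKa) is a structure $(\mathbb{L},\Box_s,\Diamond_s,\Box_\ell,\Diamond_\ell)$ where $\mathbb{L}$ is a lattice and the four unary operations satisfy, for all $a,b$: $\Diamond_s a\le b\iff a\le\Box_s b$; $\Diamond_\ell a\le b\iff a\le\Box_\ell b$; $\Box_s a\le a$, $a\le\Diamond_s a$, $a\le\Box_\ell a$, $\Diamond_\ell a\le a$; $\Box_s a\le\Box_s\Box_s a$, $\Diamond_s\Diamond_s a\le\Diamond_s a$, $\Box_\ell\Box_\ell a\le\Box_\ell a$, $\Diamond_\ell a\le\Diamond_\ell\Diamond_\ell a$. An aKa satisfying the quasi-inequality in (i) is called a K-IA3$_\ell$; one satisfying the quasi-inequality in (ii) is called a K-IA3$_s$. *)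

theory Defs
  imports Main
begin

text \<open>Abstract Kent algebra: a lattice (the type class) with four unary operations
  bs (box_s), ds (diamond_s), bl (box_ell), dl (diamond_ell).\<close>

definition aKa :: "('a::lattice \<Rightarrow> 'a) \<Rightarrow> ('a \<Rightarrow> 'a) \<Rightarrow> ('a \<Rightarrow> 'a) \<Rightarrow> ('a \<Rightarrow> 'a) \<Rightarrow> bool" where
  "aKa bs ds bl dl \<longleftrightarrow>
     (\<forall>a b. ds a \<le> b \<longleftrightarrow> a \<le> bs b) \<and>
     (\<forall>a b. dl a \<le> b \<longleftrightarrow> a \<le> bl b) \<and>
     (\<forall>a. bs a \<le> a) \<and> (\<forall>a. a \<le> ds a) \<and> (\<forall>a. a \<le> bl a) \<and> (\<forall>a. dl a \<le> a) \<and>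
     (\<forall>a. bs a \<le> bs (bs a)) \<and> (\<forall>a. ds (ds a) \<le> ds a) \<and>
     (\<forall>a. bl (bl a) \<le> bl a) \<and> (\<forall>a. dl a \<le> dl (dl a))"

end

theory Submission
  imports Defs
begin

text \<open>In both parts one operator of the pair is a closure operator c and the other an interior
  operator i (monotonicity comes from the adjunctions). The elements a \<sqinter> c b and i a \<squnion> b
  always have comparable closures and interiors, which gives one direction; conversely, if
  c a \<le> c b and i a \<le> i b, then a \<le> a \<sqinter> c b \<le> i a \<squnion> b \<le> b.\<close>

definition closure_operator :: "('a::order \<Rightarrow> 'a) \<Rightarrow> bool" where
  "closure_operator c \<longleftrightarrow> mono c \<and> (\<forall>a. a \<le> c a) \<and> (\<forall>a. c (c a) = c a)"

definition interior_operator :: "('a::order \<Rightarrow> 'a) \<Rightarrow> bool" where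
  "interior_operator i \<longleftrightarrow> mono i \<and> (\<forall>a. i a \<le> a) \<and> (\<forall>a. i (i a) = i a)"

lemma galois_connection_monos:
  fixes f g :: "'a::order \<Rightarrow> 'a"
  assumes "\<And>a b. f a \<le> b \<longleftrightarrow> a \<le> g b"
  shows "mono f" and "mono g"
  using assms by (metis monoI order_refl order_trans)+

lemma aKa_operators:
  assumes "aKa bs ds bl dl"
  shows "interior_operator bs" and "closure_operator ds"
    and "closure_operator bl" and "interior_operator dl"
proof -
  have "\<And>a b. ds a \<le> b \<longleftrightarrow> a \<le> bs b" and "\<And>a b. dl a \<le> b \<longleftrightarrow> a \<le> bl b"
    using assms by (simp_all add: aKa_def)
  then have "mono bs" "mono ds" "mono bl" "mono dl"
    by (blast intro: galois_connection_monos)+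
  then show "interior_operator bs" and "closure_operator ds"
    and "closure_operator bl" and "interior_operator dl"
    using assms unfolding aKa_def closure_operator_def interior_operator_def
    by (metis order_antisym)+
qed

lemma separation_iff_inf_closure_le_sup_interior:
  fixes c i :: "'a::lattice \<Rightarrow> 'a"
  assumes c: "closure_operator c" and i: "interior_operator i"
  shows "(\<forall>a b. c a \<le> c b \<and> i a \<le> i b \<longrightarrow> a \<le> b) \<longleftrightarrow>
         (\<forall>a b. inf a (c b) \<le> sup (i a) b)"
proof
  assume sep: "\<forall>a b. c a \<le> c b \<and> i a \<le> i b \<longrightarrow> a \<le> b"
  show "\<forall>a b. inf a (c b) \<le> sup (i a) b"
  proof (intro allI)
    fix a b
    have "c (inf a (c b)) \<le> c (c b)"
      using c by (metis closure_operator_def inf_le2 monoD)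
    also have "\<dots> \<le> c (sup (i a) b)"
      using c by (metis closure_operator_def sup_ge2 monoD)
    finally have closures: "c (inf a (c b)) \<le> c (sup (i a) b)" .
    have "i (inf a (c b)) \<le> i (i a)"
      using i by (metis interior_operator_def inf_le1 monoD)
    also have "\<dots> \<le> i (sup (i a) b)"
      using i by (metis interior_operator_def sup_ge1 monoD)
    finally have interiors: "i (inf a (c b)) \<le> i (sup (i a) b)" .
    show "inf a (c b) \<le> sup (i a) b"
      using sep closures interiors by blast
  qed
next
  assume ineq: "\<forall>a b. inf a (c b) \<le> sup (i a) b"
  show "\<forall>a b. c a \<le> c b \<and> i a \<le> i b \<longrightarrow> a \<le> b"
  proof (intro allI impI)
    fix a b
    assume "c a \<le> c b \<and> i a \<le> i b"
    then have "a \<le> c b" and "i a \<le> b"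
      using c i unfolding closure_operator_def interior_operator_def
      by (blast intro: order_trans)+
    then have "a \<le> inf a (c b)" by simp
    also have "\<dots> \<le> sup (i a) b" using ineq by blast
    also have "\<dots> \<le> b" using \<open>i a \<le> b\<close> by simp
    finally show "a \<le> b" .
  qed
qed

theorem mainTheorem6:
  fixes bs ds bl dl :: "'a::lattice \<Rightarrow> 'a"
  assumes "aKa bs ds bl dl"
  shows "((\<forall>a b. bl a \<le> bl b \<and> dl a \<le> dl b \<longrightarrow> a \<le> b) \<longleftrightarrow>
           (\<forall>a b. inf a (bl b) \<le> sup (dl a) b))
       \<and> ((\<forall>a b. bs a \<le> bs b \<and> ds a \<le> ds b \<longrightarrow> a \<le> b) \<longleftrightarrow>
           (\<forall>a b. inf a (ds b) \<le> sup (bs a) b))"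
proof
  show "(\<forall>a b. bl a \<le> bl b \<and> dl a \<le> dl b \<longrightarrow> a \<le> b) \<longleftrightarrow>
        (\<forall>a b. inf a (bl b) \<le> sup (dl a) b)"
    using separation_iff_inf_closure_le_sup_interior aKa_operators assms by blast
  have "(\<forall>a b. ds a \<le> ds b \<and> bs a \<le> bs b \<longrightarrow> a \<le> b) \<longleftrightarrow>
        (\<forall>a b. inf a (ds b) \<le> sup (bs a) b)"
    using separation_iff_inf_closure_le_sup_interior aKa_operators assms by blast
  then show "(\<forall>a b. bs a \<le> bs b \<and> ds a \<le> ds b \<longrightarrow> a \<le> b) \<longleftrightarrow>
             (\<forall>a b. inf a (ds b) \<le> sup (bs a) b)"
    by (simp add: conj_commute)
qed

end
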